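(* Fix a noise variance $\sigma_W^2>0$ and let $\lambda_\gamma(0,1)$ be the Gittins index (defined in the context) of an arm with standard normal prior $N(0,1)$. Then \[ \lambda_\gamma(0,1)\ge \sqrt{2\log\left(\frac{1}{1-\gamma}\right)}+o(1)\quad\text{as } \gamma\to1. \]
   Context: One-armed Gaussian bandit: the arm has unknown quality $\theta\sim N(\mu,\sigma^2)$ (the prior), and conditional on $\theta$ the rewards $R_0,R_1,R_2,\ldots$ are i.i.d. $N(\theta,\sigma_W^2)$, where $\sigma_W^2>0$ is a fixed noise variance. Let $\mathcal{H}_t$ be the $\sigma$-algebra generated by $R_0,\ldots,R_{t-1}$ ($\mathcal{H}_0$ trivial). For a discount factor $\gamma\in(0,1)$ and a tax $\lambda\in\mathbb{R}$, define \[ V_\gamma^\lambda(\mu,\sigma)=\sup_{\tau\ge 1}\mathbb{E}\Big[\sum_{t=0}^{\tau}\gamma^t(\theta-\lambda)\Big], \] where the supremum is over stopping times $\tau\ge 1$ (possibly infinite) with respect to the filtration $(\mathcal{H}_t)_{t\ge0}$, and the expectation is under the model with prior $N(\mu,\sigma^2)$. The Gittins index is $\lambda_\gamma(\mu,\sigma^2)=\sup\{\lambda\in\mathbb{R} : V_\gamma^\lambda(\mu,\sigma)\ge 0\}$. Here $\mu=0$, $\sigma^2=1$. *)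

theory Defs
  imports "HOL-Probability.Probability"
begin

text \<open>A sample point is a pair
  (theta, eps) where theta ~ N(mu, sig^2) is the arm quality and eps_0, eps_1, ... are
  i.i.d. standard normal noise variables independent of theta.  The rewards are
  R_t = theta + sW * eps_t, so that conditional on theta they are i.i.d. N(theta, sW^2).
  Here sig and sW are standard deviations (sig^2 = prior variance, sW^2 = noise variance).\<close>

definition noise_space :: "(nat \<Rightarrow> real) measure" where
  "noise_space = (\<Pi>\<^sub>M i\<in>(UNIV::nat set). density lborel std_normal_density)"

definition bandit_space :: "real \<Rightarrow> real \<Rightarrow> (real \<times> (nat \<Rightarrow> real)) measure" where
  "bandit_space mu sig = density lborel (normal_density mu sig) \<Otimes>\<^sub>M noise_space"

definition arm_quality :: "real \<times> (nat \<Rightarrow> real) \<Rightarrow> real" where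
  "arm_quality \<omega> = fst \<omega>"

definition reward :: "real \<Rightarrow> nat \<Rightarrow> real \<times> (nat \<Rightarrow> real) \<Rightarrow> real" where
  "reward sW t \<omega> = fst \<omega> + sW * snd \<omega> t"

definition history :: "real \<Rightarrow> real \<Rightarrow> real \<Rightarrow> nat \<Rightarrow> (real \<times> (nat \<Rightarrow> real)) measure" where
  "history mu sig sW t =
     vimage_algebra (space (bandit_space mu sig))
       (\<lambda>\<omega>. \<lambda>i\<in>{..<t}. reward sW i \<omega>) (\<Pi>\<^sub>M i\<in>{..<t}. (borel :: real measure))"

definition admissible_stop :: "real \<Rightarrow> real \<Rightarrow> real \<Rightarrow> (real \<times> (nat \<Rightarrow> real) \<Rightarrow> enat) \<Rightarrow> bool" where
  "admissible_stop mu sig sW \<tau> \<longleftrightarrow>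
     (\<forall>\<omega>\<in>space (bandit_space mu sig). 1 \<le> \<tau> \<omega>) \<and>
     (\<forall>t::nat. {\<omega>\<in>space (bandit_space mu sig). \<tau> \<omega> \<le> enat t} \<in> sets (history mu sig sW t))"

definition gittins_value :: "real \<Rightarrow> real \<Rightarrow> real \<Rightarrow> real \<Rightarrow> real \<Rightarrow> real" where
  "gittins_value mu sig sW \<gamma> lam =
     (SUP \<tau>\<in>{\<tau>. admissible_stop mu sig sW \<tau>}.
        integral\<^sup>L (bandit_space mu sig)
          (\<lambda>\<omega>. \<Sum>t. if enat t \<le> \<tau> \<omega> then \<gamma> ^ t * (arm_quality \<omega> - lam) else 0))"

definition gittins_index :: "real \<Rightarrow> real \<Rightarrow> real \<Rightarrow> real \<Rightarrow> real" where
  "gittins_index mu sig sW \<gamma> = Sup {lam. gittins_value mu sig sW \<gamma> lam \<ge> 0}"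

end

theory Submission
  imports Defs "HOL-Real_Asymp.Real_Asymp"
begin

(* Retiring immediately earns nothing, so a tax lam lies below the Gittins index as soon as
   some stopping rule earns a nonnegative expected discounted payoff at tax lam.  Take the
   explore-then-commit rule: pull the arm n times, then continue forever if the sample mean
   of the rewards is at least lam + 2 delta and retire otherwise.  With
   L = sqrt (2 log (1 / (1 - gamma))), so that 1 - gamma = exp (- L^2 / 2), choose
   lam = L - 1 / sqrt L, delta = 1 / L and n of order sW^2 L^4.  Exploring costs at most
   (n + 1) lam <= L^6.  The sample mean of the noise is within delta of 0 except with
   probability sqrt 2 exp (- L^2), and then the arm is kept whenever theta >= lam + 3 delta,
   which gains 3 delta per round on an event of probability about delta phi (L - 1 / sqrt L).
   Kept forever, this is worth about exp (L^2 / 2) phi (L - 1 / sqrt L) / L^2, which grows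
   like exp (sqrt L) / L^2 and so beats L^6. *)

section \<open>Gaussian tail bounds\<close>

abbreviation normal_measure :: "real \<Rightarrow> real \<Rightarrow> real measure" where
  "normal_measure \<mu> \<sigma> \<equiv> density lborel (normal_density \<mu> \<sigma>)"

lemma normal_density_eq_scaled:
  assumes "0 < \<sigma>"
  shows "normal_density \<mu> \<sigma> z =
    sqrt 2 * exp (- (z - \<mu>)\<^sup>2 / (4 * \<sigma>\<^sup>2)) * normal_density \<mu> (sqrt 2 * \<sigma>) z"
proof -
  have norm: "sqrt (2 * pi * (sqrt 2 * \<sigma>)\<^sup>2) = sqrt 2 * sqrt (2 * pi * \<sigma>\<^sup>2)"
    by (simp add: real_sqrt_mult[symmetric] algebra_simps)
  have "exp (- ((z - \<mu>)\<^sup>2 / (2 * \<sigma>\<^sup>2))) =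
      exp (- (z - \<mu>)\<^sup>2 / (4 * \<sigma>\<^sup>2)) * exp (- (z - \<mu>)\<^sup>2 / (4 * \<sigma>\<^sup>2))"
    using assms by (simp add: exp_add[symmetric] field_simps)
  moreover have "0 < sqrt (2 * pi * \<sigma>\<^sup>2)"
    using assms by simp
  ultimately show ?thesis
    unfolding normal_density_def norm by (simp add: field_simps)
qed

lemma normal_abs_tail_le:
  assumes "prob_space M" and X: "distributed M lborel X (normal_density 0 \<sigma>)"
    and "0 < \<sigma>" "0 \<le> a"
  shows "measure M {x\<in>space M. a \<le> \<bar>X x\<bar>} \<le> sqrt 2 * exp (- a\<^sup>2 / (4 * \<sigma>\<^sup>2))"
proof -
  interpret prob_space M by fact
  have [measurable]: "X \<in> borel_measurable M"
    using distributed_measurable[OF X] by (simp add: measurable_cong_sets[OF refl sets_lborel])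
  let ?S = "{z::real. a \<le> \<bar>z\<bar>}"
  have [measurable]: "?S \<in> sets borel"
    by measurable
  have "{x\<in>space M. a \<le> \<bar>X x\<bar>} \<in> sets M"
    by measurable
  then have "measure M {x\<in>space M. a \<le> \<bar>X x\<bar>} = (\<integral>x. indicator {x\<in>space M. a \<le> \<bar>X x\<bar>} x \<partial>M)"
    by simp
  also have "\<dots> = (\<integral>x. indicator ?S (X x) \<partial>M)"
    by (rule Bochner_Integration.integral_cong) (auto simp: indicator_def)
  also have "\<dots> = (\<integral>z. normal_density 0 \<sigma> z * indicator ?S z \<partial>lborel)"
    by (rule distributed_integral[OF X, symmetric]) auto
  also have "\<dots> \<le> (\<integral>z. sqrt 2 * exp (- a\<^sup>2 / (4 * \<sigma>\<^sup>2)) * normal_density 0 (sqrt 2 * \<sigma>) z \<partial>lborel)"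
  proof (rule integral_mono)
    show "integrable lborel (\<lambda>z. normal_density 0 \<sigma> z * indicator ?S z)"
      by (rule Bochner_Integration.integrable_bound[OF integrable_normal_density[of \<sigma> 0]])
        (use \<open>0 < \<sigma>\<close> in \<open>auto simp: indicator_def\<close>)
    show "integrable lborel (\<lambda>z. sqrt 2 * exp (- a\<^sup>2 / (4 * \<sigma>\<^sup>2)) * normal_density 0 (sqrt 2 * \<sigma>) z)"
      using integrable_normal_density[of "sqrt 2 * \<sigma>" 0] \<open>0 < \<sigma>\<close> by simp
  next
    fix z :: real
    have "exp (- z\<^sup>2 / (4 * \<sigma>\<^sup>2)) \<le> exp (- a\<^sup>2 / (4 * \<sigma>\<^sup>2))" if "a \<le> \<bar>z\<bar>"
      using that \<open>0 \<le> a\<close> \<open>0 < \<sigma>\<close> abs_le_square_iff[of a z]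
      by (auto simp: divide_right_mono)
    then show "normal_density 0 \<sigma> z * indicator ?S z \<le>
        sqrt 2 * exp (- a\<^sup>2 / (4 * \<sigma>\<^sup>2)) * normal_density 0 (sqrt 2 * \<sigma>) z"
      using normal_density_eq_scaled[OF \<open>0 < \<sigma>\<close>, of 0 z]
      by (auto simp: indicator_def mult_right_mono)
  qed
  also have "\<dots> = sqrt 2 * exp (- a\<^sup>2 / (4 * \<sigma>\<^sup>2))"
    using \<open>0 < \<sigma>\<close> by simp
  finally show ?thesis .
qed

lemma std_normal_upper_tail_ge:
  assumes "0 \<le> a" "0 < \<eta>"
  shows "\<eta> * std_normal_density (a + \<eta>) \<le> measure (normal_measure 0 1) {a..}"
proof -
  have "\<eta> * std_normal_density (a + \<eta>) = (\<integral>x. std_normal_density (a + \<eta>) * indicator {a..a+\<eta>} x \<partial>lborel)"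
    using \<open>0 < \<eta>\<close> by simp
  also have "\<dots> \<le> (\<integral>x. std_normal_density x * indicator {a..} x \<partial>lborel)"
  proof (rule integral_mono)
    show "integrable lborel (\<lambda>x. std_normal_density x * indicator {a..} x)"
      by (rule Bochner_Integration.integrable_bound[OF integrable_normal_density[of 1 0]])
        (auto simp: indicator_def)
    show "integrable lborel (\<lambda>x. std_normal_density (a + \<eta>) * indicator {a..a+\<eta>} x)"
      using \<open>0 < \<eta>\<close> by (intro integrable_mult_right integrable_real_indicator) auto
  next
    fix x :: real
    have "std_normal_density (a + \<eta>) \<le> std_normal_density x" if "x \<in> {a..a+\<eta>}"
    proof -
      have "x\<^sup>2 \<le> (a + \<eta>)\<^sup>2"
        using that \<open>0 \<le> a\<close> by (intro power_mono) auto
      then show ?thesis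
        by (simp add: std_normal_density_def divide_right_mono)
    qed
    then show "std_normal_density (a + \<eta>) * indicator {a..a+\<eta>} x \<le> std_normal_density x * indicator {a..} x"
      by (auto simp: indicator_def)
  qed
  also have "\<dots> = (\<integral>x. indicator {a..} x \<partial>normal_measure 0 1)"
    by (subst integral_density) auto
  also have "\<dots> = measure (normal_measure 0 1) {a..}"
    by simp
  finally show ?thesis .
qed

lemma normal_measure_first_moment:
  assumes "0 < \<sigma>"
  shows "integrable (normal_measure \<mu> \<sigma>) (\<lambda>x. x)" "(\<integral>x. x \<partial>normal_measure \<mu> \<sigma>) = \<mu>"
  using integrable_normal_moment_nz_1[OF assms] integral_normal_moment_nz_1[OF assms]
  by (simp_all add: integrable_density integral_density)

section \<open>The bandit model\<close>

lemma prob_space_noise_space: "prob_space noise_space"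
  unfolding noise_space_def by (intro prob_space_PiM prob_space_normal_density) simp

lemma space_noise_space: "space noise_space = UNIV"
  by (simp add: noise_space_def space_PiM)

lemma sets_noise_space: "sets noise_space = sets (\<Pi>\<^sub>M i\<in>(UNIV::nat set). (borel::real measure))"
  unfolding noise_space_def by (intro sets_PiM_cong) auto

lemma measurable_noise_space:
  "measurable noise_space M = measurable (\<Pi>\<^sub>M i\<in>(UNIV::nat set). (borel::real measure)) M"
  by (rule measurable_cong_sets[OF sets_noise_space refl])

lemma space_bandit_space: "space (bandit_space mu sig) = UNIV"
  by (simp add: bandit_space_def space_pair_measure space_noise_space)

lemma sets_bandit_space:
  "sets (bandit_space mu sig) =
    sets ((borel::real measure) \<Otimes>\<^sub>M (\<Pi>\<^sub>M i\<in>(UNIV::nat set). (borel::real measure)))"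
  unfolding bandit_space_def by (intro sets_pair_measure_cong) (auto simp: sets_noise_space)

lemma measurable_bandit_space:
  "measurable (bandit_space mu sig) M =
    measurable ((borel::real measure) \<Otimes>\<^sub>M (\<Pi>\<^sub>M i\<in>(UNIV::nat set). (borel::real measure))) M"
  by (rule measurable_cong_sets[OF sets_bandit_space refl])

lemma measurable_reward[measurable]: "reward sW i \<in> borel_measurable (bandit_space mu sig)"
  unfolding measurable_bandit_space reward_def by measurable

lemma sets_history_subset: "sets (history mu sig sW t) \<subseteq> sets (bandit_space mu sig)"
  unfolding history_def by (intro sets_image_in_sets measurable_restrict) simp_all

lemma noise_coordinate_distributed: "distributed noise_space lborel (\<lambda>y. y i) std_normal_density"
proof -
  have "distr noise_space lborel (\<lambda>y. y i) = distr noise_space (normal_measure 0 1) (\<lambda>y. y i)"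
    by (rule distr_cong) auto
  also have "\<dots> = normal_measure 0 1"
    unfolding noise_space_def by (intro distr_PiM_component prob_space_normal_density) simp_all
  finally show ?thesis
    by (auto simp: distributed_def measurable_noise_space)
qed

lemma indep_vars_noise_coordinates:
  assumes "finite I" "I \<noteq> {}"
  shows "prob_space.indep_vars noise_space (\<lambda>_. borel) (\<lambda>i y. y i) I"
proof -
  interpret product_prob_space "\<lambda>_::nat. normal_measure 0 1" UNIV
    by (intro product_prob_spaceI prob_space_normal_density) simp
  interpret prob_space noise_space
    by (rule prob_space_noise_space)
  have "distr noise_space (\<Pi>\<^sub>M i\<in>I. borel) (\<lambda>y. \<lambda>i\<in>I. y i) =
      distr noise_space (\<Pi>\<^sub>M i\<in>I. normal_measure 0 1) (\<lambda>y. restrict y I)"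
    by (rule distr_cong) (auto intro!: sets_PiM_cong)
  also have "\<dots> = (\<Pi>\<^sub>M i\<in>I. normal_measure 0 1)"
    unfolding noise_space_def using assms by (intro distr_PiM_restrict_finite) auto
  also have "\<dots> = (\<Pi>\<^sub>M i\<in>I. distr noise_space borel (\<lambda>y. y i))"
  proof (rule PiM_cong[OF refl])
    fix i
    have "distr noise_space borel (\<lambda>y. y i) = distr noise_space lborel (\<lambda>y. y i)"
      by (rule distr_cong) auto
    then show "normal_measure 0 1 = distr noise_space borel (\<lambda>y. y i)"
      using noise_coordinate_distributed[of i] by (simp add: distributed_def)
  qed
  finally show ?thesis
    using assms by (subst indep_vars_iff_distr_eq_PiM) (auto simp: measurable_noise_space)
qed

lemma noise_partial_sum_distributed:
  assumes "0 < n"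
  shows "distributed noise_space lborel (\<lambda>y. \<Sum>i<n. y i) (normal_density 0 (sqrt n))"
proof -
  have "{..<n} \<noteq> {}"
    using assms by auto
  then show ?thesis
    using prob_space.sum_indep_normal[OF prob_space_noise_space, of "{..<n}" "\<lambda>i y. y i" "\<lambda>_. 1" "\<lambda>_. 0"]
      indep_vars_noise_coordinates noise_coordinate_distributed
    by simp
qed

section \<open>Discounted payoffs and the Gittins index\<close>

definition discounted_length :: "real \<Rightarrow> enat \<Rightarrow> real" where
  "discounted_length \<gamma> e = (\<Sum>t. if enat t \<le> e then \<gamma> ^ t else 0)"

lemma summable_discounted_length:
  fixes \<gamma> :: real
  assumes "0 \<le> \<gamma>" "\<gamma> < 1"
  shows "summable (\<lambda>t. if enat t \<le> e then \<gamma> ^ t else 0)"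
  by (rule summable_comparison_test[OF _ summable_geometric[of \<gamma>]]) (use assms in auto)

lemma discounted_length_bounds:
  assumes "0 \<le> \<gamma>" "\<gamma> < 1"
  shows "1 \<le> discounted_length \<gamma> e" "discounted_length \<gamma> e \<le> 1 / (1 - \<gamma>)"
proof -
  have "(\<Sum>t<1. if enat t \<le> e then \<gamma> ^ t else 0) \<le> discounted_length \<gamma> e"
    unfolding discounted_length_def
    by (rule sum_le_suminf[OF summable_discounted_length]) (use assms in auto)
  then show "1 \<le> discounted_length \<gamma> e"
    by (simp add: zero_enat_def[symmetric])
  have "discounted_length \<gamma> e \<le> (\<Sum>t. \<gamma> ^ t)"
    unfolding discounted_length_def
    by (rule suminf_le[OF _ summable_discounted_length summable_geometric]) (use assms in auto)
  then show "discounted_length \<gamma> e \<le> 1 / (1 - \<gamma>)"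
    using suminf_geometric[of \<gamma>] assms by simp
qed

lemma discounted_length_infinity:
  assumes "0 \<le> \<gamma>" "\<gamma> < 1"
  shows "discounted_length \<gamma> \<infinity> = 1 / (1 - \<gamma>)"
  unfolding discounted_length_def using suminf_geometric[of \<gamma>] assms by simp

lemma discounted_length_enat: "discounted_length \<gamma> (enat n) = (\<Sum>t\<le>n. \<gamma> ^ t)"
  unfolding discounted_length_def by (subst suminf_finite[of "{..n}"]) auto

lemma discounted_sum_eq:
  assumes "0 \<le> \<gamma>" "\<gamma> < 1"
  shows "(\<Sum>t. if enat t \<le> e then \<gamma> ^ t * x else 0) = discounted_length \<gamma> e * x"
  unfolding discounted_length_def
  by (subst suminf_mult2[OF summable_discounted_length[OF assms]]) (auto intro!: suminf_cong)

lemma measurable_admissible_stop: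
  assumes "admissible_stop mu sig sW \<tau>"
  shows "\<tau> \<in> measurable (bandit_space mu sig) (count_space UNIV)"
proof -
  have stopped: "{\<omega>. \<tau> \<omega> \<le> enat t} \<in> sets (bandit_space mu sig)" for t
  proof -
    have "{\<omega>. \<tau> \<omega> \<le> enat t} \<in> sets (history mu sig sW t)"
      using assms by (simp add: admissible_stop_def space_bandit_space)
    then show ?thesis
      using sets_history_subset by blast
  qed
  have "\<tau> -` {e} \<in> sets (bandit_space mu sig)" for e
  proof (cases e)
    case (enat t)
    have "\<tau> \<omega> = enat t \<longleftrightarrow> \<tau> \<omega> \<le> enat t \<and> (\<forall>s<t. \<not> \<tau> \<omega> \<le> enat s)" for \<omega>
      by (cases "\<tau> \<omega>") (auto simp: order.order_iff_strict)
    then have "\<tau> -` {e} = {\<omega>. \<tau> \<omega> \<le> enat t} - (\<Union>s<t. {\<omega>. \<tau> \<omega> \<le> enat s})"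
      using enat by auto
    then show ?thesis
      using stopped by auto
  next
    case infinity
    have "\<tau> \<omega> = \<infinity> \<longleftrightarrow> (\<forall>t. \<not> \<tau> \<omega> \<le> enat t)" for \<omega>
      by (cases "\<tau> \<omega>") auto
    then have "\<tau> -` {e} = space (bandit_space mu sig) - (\<Union>t. {\<omega>. \<tau> \<omega> \<le> enat t})"
      using infinity by (auto simp: space_bandit_space)
    then show ?thesis
      using stopped by auto
  qed
  then show ?thesis
    by (simp add: measurable_count_space_eq2_countable space_bandit_space)
qed

lemma gittins_value_eq:
  assumes "0 \<le> \<gamma>" "\<gamma> < 1"
  shows "gittins_value mu sig sW \<gamma> lam =
    (SUP \<tau>\<in>{\<tau>. admissible_stop mu sig sW \<tau>}.
      \<integral>\<omega>. discounted_length \<gamma> (\<tau> \<omega>) * (fst \<omega> - lam) \<partial>bandit_space mu sig)"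
  unfolding gittins_value_def arm_quality_def discounted_sum_eq[OF assms] ..

lemma
  fixes f :: "real \<Rightarrow> real"
  assumes "f \<in> borel_measurable borel"
  shows integrable_bandit_space_fst:
      "integrable (bandit_space mu sig) (\<lambda>\<omega>. f (fst \<omega>)) \<longleftrightarrow> integrable (normal_measure mu sig) f"
    and integral_bandit_space_fst:
      "(\<integral>\<omega>. f (fst \<omega>) \<partial>bandit_space mu sig) = (\<integral>x. f x \<partial>normal_measure mu sig)"
proof -
  interpret prob_space noise_space
    by (rule prob_space_noise_space)
  have fst: "fst \<in> measurable (bandit_space mu sig) (normal_measure mu sig)"
    by (simp add: bandit_space_def)
  have distr: "distr (bandit_space mu sig) (normal_measure mu sig) fst = normal_measure mu sig"
    unfolding bandit_space_def by (rule distr_pair_fst)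
  show "integrable (bandit_space mu sig) (\<lambda>\<omega>. f (fst \<omega>)) \<longleftrightarrow> integrable (normal_measure mu sig) f"
    using integrable_distr_eq[OF fst, of f] assms distr by simp
  show "(\<integral>\<omega>. f (fst \<omega>) \<partial>bandit_space mu sig) = (\<integral>x. f x \<partial>normal_measure mu sig)"
    using integral_distr[OF fst, of f] assms distr by simp
qed

lemma discounted_payoff_bounds:
  fixes W x lam \<gamma> :: real
  assumes "1 \<le> W" "W \<le> 1 / (1 - \<gamma>)" "0 \<le> \<gamma>" "\<gamma> < 1"
  shows "\<bar>W * (x - lam)\<bar> \<le> (\<bar>x\<bar> + \<bar>lam\<bar>) / (1 - \<gamma>)"
    and "0 \<le> lam \<Longrightarrow> W * (x - lam) \<le> x - lam + \<bar>x\<bar> / (1 - \<gamma>)"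
proof -
  have "\<bar>W * (x - lam)\<bar> \<le> 1 / (1 - \<gamma>) * \<bar>x - lam\<bar>"
    using assms mult_right_mono[of W "1 / (1 - \<gamma>)" "\<bar>x - lam\<bar>"] by (simp add: abs_mult)
  also have "\<dots> \<le> 1 / (1 - \<gamma>) * (\<bar>x\<bar> + \<bar>lam\<bar>)"
    using assms by (intro mult_left_mono) auto
  finally show "\<bar>W * (x - lam)\<bar> \<le> (\<bar>x\<bar> + \<bar>lam\<bar>) / (1 - \<gamma>)"
    by simp
  assume "0 \<le> lam"
  show "W * (x - lam) \<le> x - lam + \<bar>x\<bar> / (1 - \<gamma>)"
  proof (cases "lam \<le> x")
    case True
    have "W * (x - lam) = x - lam + (W - 1) * (x - lam)"
      by (simp add: algebra_simps)
    also have "(W - 1) * (x - lam) \<le> 1 / (1 - \<gamma>) * \<bar>x\<bar>"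
      using assms True \<open>0 \<le> lam\<close> by (intro mult_mono) auto
    finally show ?thesis
      by simp
  next
    case False
    then have "W * (x - lam) \<le> x - lam"
      using assms by (simp add: mult_le_cancel_right2)
    moreover have "0 \<le> \<bar>x\<bar> / (1 - \<gamma>)"
      using assms by simp
    ultimately show ?thesis
      by linarith
  qed
qed

lemma expected_payoff_bounds:
  fixes lam :: real
  assumes "0 < sig" "0 \<le> \<gamma>" "\<gamma> < 1" "admissible_stop mu sig sW \<tau>"
  defines "payoff \<equiv> \<lambda>\<omega>. discounted_length \<gamma> (\<tau> \<omega>) * (fst \<omega> - lam)"
  shows "integrable (bandit_space mu sig) payoff"
    and "0 \<le> lam \<Longrightarrow> (\<integral>\<omega>. payoff \<omega> \<partial>bandit_space mu sig) \<le>
      mu + (\<integral>x. \<bar>x\<bar> \<partial>normal_measure mu sig) / (1 - \<gamma>) - lam"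
proof -
  interpret prior: prob_space "normal_measure mu sig"
    using prob_space_normal_density[OF \<open>0 < sig\<close>] .
  note length_bounds = discounted_length_bounds[OF \<open>0 \<le> \<gamma>\<close> \<open>\<gamma> < 1\<close>]
  note moment = normal_measure_first_moment[OF \<open>0 < sig\<close>, of mu]
  have "(\<lambda>\<omega>. discounted_length \<gamma> (\<tau> \<omega>)) \<in> borel_measurable (bandit_space mu sig)"
    using measurable_admissible_stop[OF assms(4)] by (rule measurable_compose) simp
  moreover have "fst \<in> borel_measurable (bandit_space mu sig)"
    unfolding measurable_bandit_space by simp
  ultimately have measurable: "payoff \<in> borel_measurable (bandit_space mu sig)"
    unfolding payoff_def by (intro borel_measurable_times borel_measurable_diff) auto
  have "integrable (normal_measure mu sig) (\<lambda>x. (\<bar>x\<bar> + \<bar>lam\<bar>) / (1 - \<gamma>))"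
    using moment by simp
  then have "integrable (bandit_space mu sig) (\<lambda>\<omega>. (\<bar>fst \<omega>\<bar> + \<bar>lam\<bar>) / (1 - \<gamma>))"
    by (simp add: integrable_bandit_space_fst[where f="\<lambda>x. (\<bar>x\<bar> + \<bar>lam\<bar>) / (1 - \<gamma>)"])
  then show integrable: "integrable (bandit_space mu sig) payoff"
    by (rule Bochner_Integration.integrable_bound[OF _ measurable])
      (use discounted_payoff_bounds(1) length_bounds assms in \<open>auto simp: payoff_def\<close>)
  assume "0 \<le> lam"
  have "integrable (normal_measure mu sig) (\<lambda>x. x - lam + \<bar>x\<bar> / (1 - \<gamma>))"
    using moment by simp
  then have bound: "integrable (bandit_space mu sig) (\<lambda>\<omega>. fst \<omega> - lam + \<bar>fst \<omega>\<bar> / (1 - \<gamma>))"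
    by (simp add: integrable_bandit_space_fst[where f="\<lambda>x. x - lam + \<bar>x\<bar> / (1 - \<gamma>)"])
  have "(\<integral>\<omega>. payoff \<omega> \<partial>bandit_space mu sig) \<le>
      (\<integral>\<omega>. fst \<omega> - lam + \<bar>fst \<omega>\<bar> / (1 - \<gamma>) \<partial>bandit_space mu sig)"
    using assms(2,3) \<open>0 \<le> lam\<close> length_bounds discounted_payoff_bounds(2)
    by (intro integral_mono[OF integrable bound]) (auto simp: payoff_def)
  also have "\<dots> = (\<integral>x. x - lam + \<bar>x\<bar> / (1 - \<gamma>) \<partial>normal_measure mu sig)"
    by (rule integral_bandit_space_fst) simp
  also have "\<dots> = mu + (\<integral>x. \<bar>x\<bar> \<partial>normal_measure mu sig) / (1 - \<gamma>) - lam"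
    using moment prior.prob_space by simp
  finally show "(\<integral>\<omega>. payoff \<omega> \<partial>bandit_space mu sig) \<le>
      mu + (\<integral>x. \<bar>x\<bar> \<partial>normal_measure mu sig) / (1 - \<gamma>) - lam" .
qed

lemma gittins_index_ge:
  assumes "0 < sig" "0 \<le> \<gamma>" "\<gamma> < 1" "0 \<le> lam" and \<tau>: "admissible_stop mu sig sW \<tau>"
    and nonneg: "0 \<le> (\<integral>\<omega>. discounted_length \<gamma> (\<tau> \<omega>) * (fst \<omega> - lam) \<partial>bandit_space mu sig)"
  shows "lam \<le> gittins_index mu sig sW \<gamma>"
proof -
  define C where "C = mu + (\<integral>x. \<bar>x\<bar> \<partial>normal_measure mu sig) / (1 - \<gamma>)"
  note value_eq = gittins_value_eq[OF \<open>0 \<le> \<gamma>\<close> \<open>\<gamma> < 1\<close>]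
  have value_le: "gittins_value mu sig sW \<gamma> l \<le> C - l" if "0 \<le> l" for l
    unfolding value_eq C_def using \<tau> expected_payoff_bounds(2)[OF assms(1-3) _ that]
    by (intro cSUP_least) auto
  have "0 \<le> gittins_value mu sig sW \<gamma> lam"
    unfolding value_eq using \<tau> value_le[OF \<open>0 \<le> lam\<close>] expected_payoff_bounds(2)[OF assms(1-3) _ \<open>0 \<le> lam\<close>]
    by (intro order.trans[OF nonneg] cSUP_upper bdd_aboveI[where M="C - lam"]) (auto simp: C_def)
  moreover have "bdd_above {l. 0 \<le> gittins_value mu sig sW \<gamma> l}"
  proof (rule bdd_aboveI)
    fix l
    assume "l \<in> {l. 0 \<le> gittins_value mu sig sW \<gamma> l}"
    then show "l \<le> max 0 C"
      using value_le[of l] by (cases "0 \<le> l") auto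
  qed
  ultimately show ?thesis
    unfolding gittins_index_def by (intro cSup_upper) auto
qed

section \<open>The explore-then-commit rule\<close>

definition threshold_stop :: "real \<Rightarrow> nat \<Rightarrow> real \<Rightarrow> real \<times> (nat \<Rightarrow> real) \<Rightarrow> enat" where
  "threshold_stop sW n c \<omega> = (if real n * c \<le> (\<Sum>i<n. reward sW i \<omega>) then \<infinity> else enat n)"

lemma admissible_threshold_stop:
  assumes "0 < n"
  shows "admissible_stop mu sig sW (threshold_stop sW n c)"
  unfolding admissible_stop_def
proof (intro conjI ballI allI)
  fix \<omega>
  show "1 \<le> threshold_stop sW n c \<omega>"
    using assms by (auto simp: threshold_stop_def one_enat_def)
next
  fix t :: nat
  show "{\<omega> \<in> space (bandit_space mu sig). threshold_stop sW n c \<omega> \<le> enat t} \<in> sets (history mu sig sW t)"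
  proof (cases "t < n")
    case True
    then have "{\<omega> \<in> space (bandit_space mu sig). threshold_stop sW n c \<omega> \<le> enat t} = {}"
      by (auto simp: threshold_stop_def)
    then show ?thesis
      by (metis sets.empty_sets)
  next
    case False
    let ?P = "\<Pi>\<^sub>M i\<in>{..<t}. (borel :: real measure)"
    let ?A = "{x \<in> space ?P. (\<Sum>i<n. x i) < real n * c}"
    have "(\<lambda>x. \<Sum>i<n. x i) \<in> borel_measurable ?P"
      using False by (intro borel_measurable_sum measurable_component_singleton) auto
    then have "?A \<in> sets ?P"
      by measurable
    then have "(\<lambda>\<omega>. \<lambda>i\<in>{..<t}. reward sW i \<omega>) -` ?A \<inter> space (bandit_space mu sig) \<in> sets (history mu sig sW t)"
      unfolding history_def by (rule in_vimage_algebra)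
    moreover have "{\<omega> \<in> space (bandit_space mu sig). threshold_stop sW n c \<omega> \<le> enat t} =
        (\<lambda>\<omega>. \<lambda>i\<in>{..<t}. reward sW i \<omega>) -` ?A \<inter> space (bandit_space mu sig)"
      using False by (auto simp: threshold_stop_def space_PiM not_le)
    ultimately show ?thesis
      by simp
  qed
qed

lemma threshold_payoff_eq:
  assumes "0 \<le> \<gamma>" "\<gamma> < 1" "0 < n"
  shows "discounted_length \<gamma> (threshold_stop sW n c (\<theta>, y)) * (\<theta> - lam) =
    (\<Sum>t\<le>n. \<gamma> ^ t) * (\<theta> - lam) +
    (1 / (1 - \<gamma>) - (\<Sum>t\<le>n. \<gamma> ^ t)) * (indicator {c - sW * (\<Sum>i<n. y i) / n..} \<theta> * (\<theta> - lam))"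
proof -
  have "real n * c \<le> (\<Sum>i<n. reward sW i (\<theta>, y)) \<longleftrightarrow> c - sW * (\<Sum>i<n. y i) / n \<le> \<theta>"
    using assms by (simp add: reward_def sum.distrib sum_distrib_left field_simps)
  then show ?thesis
    using assms
    by (simp add: threshold_stop_def discounted_length_infinity discounted_length_enat algebra_simps)
qed

lemma
  assumes "0 < \<sigma>"
  shows integrable_normal_excess: "integrable (normal_measure 0 \<sigma>) (\<lambda>\<theta>. indicator {x..} \<theta> * (\<theta> - lam))"
    and normal_excess_ge_neg:
      "0 \<le> lam \<Longrightarrow> - lam \<le> (\<integral>\<theta>. indicator {x..} \<theta> * (\<theta> - lam) \<partial>normal_measure 0 \<sigma>)"
    and normal_excess_ge:
      "lam \<le> x \<Longrightarrow> x \<le> lam + a \<Longrightarrow>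
        a * measure (normal_measure 0 \<sigma>) {lam + a..} \<le> (\<integral>\<theta>. indicator {x..} \<theta> * (\<theta> - lam) \<partial>normal_measure 0 \<sigma>)"
proof -
  interpret prob_space "normal_measure 0 \<sigma>"
    using prob_space_normal_density[OF assms] .
  note moment = normal_measure_first_moment[OF assms, of 0]
  have abs: "integrable (normal_measure 0 \<sigma>) (\<lambda>\<theta>. \<bar>\<theta>\<bar> + \<bar>lam\<bar>)"
    using moment by simp
  have "(\<lambda>\<theta>. indicator {x..} \<theta> * (\<theta> - lam)) \<in> borel_measurable (normal_measure 0 \<sigma>)"
    by simp
  then show excess: "integrable (normal_measure 0 \<sigma>) (\<lambda>\<theta>. indicator {x..} \<theta> * (\<theta> - lam))"
    by (rule Bochner_Integration.integrable_bound[OF abs])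
      (auto simp: indicator_def abs_triangle_ineq4)
  show "- lam \<le> (\<integral>\<theta>. indicator {x..} \<theta> * (\<theta> - lam) \<partial>normal_measure 0 \<sigma>)" if "0 \<le> lam"
  proof (cases "x < 0")
    case True
    have "- lam = (\<integral>\<theta>. \<theta> - lam \<partial>normal_measure 0 \<sigma>)"
      using moment prob_space by simp
    also have "\<dots> \<le> (\<integral>\<theta>. indicator {x..} \<theta> * (\<theta> - lam) \<partial>normal_measure 0 \<sigma>)"
      using True that moment(1) by (intro integral_mono excess) (auto simp: indicator_def)
    finally show ?thesis .
  next
    case False
    have "- lam = (\<integral>\<theta>. - lam \<partial>normal_measure 0 \<sigma>)"
      using prob_space by simp
    also have "\<dots> \<le> (\<integral>\<theta>. indicator {x..} \<theta> * (\<theta> - lam) \<partial>normal_measure 0 \<sigma>)"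
      using False that by (intro integral_mono excess) (auto simp: indicator_def)
    finally show ?thesis .
  qed
  show "a * measure (normal_measure 0 \<sigma>) {lam + a..} \<le> (\<integral>\<theta>. indicator {x..} \<theta> * (\<theta> - lam) \<partial>normal_measure 0 \<sigma>)"
    if "lam \<le> x" "x \<le> lam + a"
  proof -
    have "a * measure (normal_measure 0 \<sigma>) {lam + a..} = (\<integral>\<theta>. a * indicator {lam + a..} \<theta> \<partial>normal_measure 0 \<sigma>)"
      by simp
    also have "\<dots> \<le> (\<integral>\<theta>. indicator {x..} \<theta> * (\<theta> - lam) \<partial>normal_measure 0 \<sigma>)"
    proof (rule integral_mono[OF _ excess])
      show "integrable (normal_measure 0 \<sigma>) (\<lambda>\<theta>. a * indicator {lam + a..} \<theta>)"
        by (intro integrable_mult_right integrable_real_indicator) (simp_all add: emeasure_eq_measure)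
    qed (use that in \<open>auto simp: indicator_def\<close>)
    finally show ?thesis .
  qed
qed

lemma threshold_conditional_payoff_ge:
  fixes sW \<gamma> lam \<delta> :: real and n :: nat and y :: "nat \<Rightarrow> real"
  assumes "0 < sig" "0 \<le> \<gamma>" "\<gamma> < 1" "0 < n" "0 \<le> lam"
  defines "A \<equiv> \<Sum>t\<le>n. \<gamma> ^ t"
    and "B \<equiv> 1 / (1 - \<gamma>) - (\<Sum>t\<le>n. \<gamma> ^ t)"
    and "m \<equiv> sW * (\<Sum>i<n. y i) / n"
  shows "- A * lam + B * (if \<delta> < \<bar>m\<bar> then - lam else 3 * \<delta> * measure (normal_measure 0 sig) {lam + 3 * \<delta>..})
    \<le> (\<integral>\<theta>. discounted_length \<gamma> (threshold_stop sW n (lam + 2 * \<delta>) (\<theta>, y)) * (\<theta> - lam) \<partial>normal_measure 0 sig)"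
proof -
  interpret prob_space "normal_measure 0 sig"
    using prob_space_normal_density[OF \<open>0 < sig\<close>] .
  note moment = normal_measure_first_moment[OF \<open>0 < sig\<close>, of 0]
  define excess where "excess = (\<integral>\<theta>. indicator {lam + 2 * \<delta> - m..} \<theta> * (\<theta> - lam) \<partial>normal_measure 0 sig)"
  have "B \<ge> 0"
    using discounted_length_bounds(2)[OF assms(2,3), of n] by (simp add: B_def discounted_length_enat)
  have "(\<integral>\<theta>. discounted_length \<gamma> (threshold_stop sW n (lam + 2 * \<delta>) (\<theta>, y)) * (\<theta> - lam) \<partial>normal_measure 0 sig) =
      (\<integral>\<theta>. A * (\<theta> - lam) + B * (indicator {lam + 2 * \<delta> - m..} \<theta> * (\<theta> - lam)) \<partial>normal_measure 0 sig)"
    unfolding m_def A_def B_def using assms by (simp add: threshold_payoff_eq)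
  also have "\<dots> = (\<integral>\<theta>. A * (\<theta> - lam) \<partial>normal_measure 0 sig) +
      (\<integral>\<theta>. B * (indicator {lam + 2 * \<delta> - m..} \<theta> * (\<theta> - lam)) \<partial>normal_measure 0 sig)"
    using moment integrable_normal_excess[OF \<open>0 < sig\<close>]
    by (intro Bochner_Integration.integral_add) auto
  also have "\<dots> = - A * lam + B * excess"
    using moment prob_space by (simp add: excess_def)
  finally have payoff: "(\<integral>\<theta>. discounted_length \<gamma> (threshold_stop sW n (lam + 2 * \<delta>) (\<theta>, y)) * (\<theta> - lam)
      \<partial>normal_measure 0 sig) = - A * lam + B * excess" .
  show ?thesis
  proof (cases "\<delta> < \<bar>m\<bar>")
    case True
    then show ?thesis
      unfolding payoff excess_def
      using mult_left_mono[OF normal_excess_ge_neg[OF \<open>0 < sig\<close> \<open>0 \<le> lam\<close>] \<open>B \<ge> 0\<close>]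
      by simp
  next
    case False
    then have "lam \<le> lam + 2 * \<delta> - m" "lam + 2 * \<delta> - m \<le> lam + 3 * \<delta>"
      by auto
    then show ?thesis
      unfolding payoff excess_def using False normal_excess_ge[OF \<open>0 < sig\<close>] \<open>B \<ge> 0\<close>
      by (simp add: mult_left_mono)
  qed
qed

lemma threshold_expected_payoff_ge:
  fixes sW \<gamma> lam \<delta> :: real and n :: nat
  assumes "0 < sig" "0 \<le> \<gamma>" "\<gamma> < 1" "0 < n" "0 \<le> lam"
  defines "A \<equiv> \<Sum>t\<le>n. \<gamma> ^ t"
    and "B \<equiv> 1 / (1 - \<gamma>) - (\<Sum>t\<le>n. \<gamma> ^ t)"
    and "Q \<equiv> measure (normal_measure 0 sig) {lam + 3 * \<delta>..}"
    and "P \<equiv> measure noise_space {y. \<delta> < \<bar>sW * (\<Sum>i<n. y i) / n\<bar>}"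
  shows "- A * lam + B * (3 * \<delta> * Q - (3 * \<delta> * Q + lam) * P) \<le>
    (\<integral>\<omega>. discounted_length \<gamma> (threshold_stop sW n (lam + 2 * \<delta>) \<omega>) * (fst \<omega> - lam) \<partial>bandit_space 0 sig)"
proof -
  interpret prior: prob_space "normal_measure 0 sig"
    using prob_space_normal_density[OF \<open>0 < sig\<close>] .
  interpret noise: prob_space noise_space
    by (rule prob_space_noise_space)
  interpret pair_prob_space "normal_measure 0 sig" noise_space
    by unfold_locales
  define G where "G \<omega> = discounted_length \<gamma> (threshold_stop sW n (lam + 2 * \<delta>) \<omega>) * (fst \<omega> - lam)" for \<omega>
  define S where "S = {y. \<delta> < \<bar>sW * (\<Sum>i<n. y i) / n\<bar>}"
  define k where "k y = - A * lam + B * (if y \<in> S then - lam else 3 * \<delta> * Q)" for y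
  have [measurable]: "(\<lambda>y. \<Sum>i<n. y i) \<in> borel_measurable noise_space"
    unfolding measurable_noise_space by simp
  have "{y \<in> space noise_space. \<delta> < \<bar>sW * (\<Sum>i<n. y i) / n\<bar>} \<in> sets noise_space"
    by measurable
  then have S: "S \<in> sets noise_space"
    by (simp add: S_def space_noise_space)
  have "integrable (bandit_space 0 sig) G"
    unfolding G_def using assms admissible_threshold_stop by (intro expected_payoff_bounds(1)) auto
  then have G: "integrable (normal_measure 0 sig \<Otimes>\<^sub>M noise_space) (\<lambda>(x, y). G (x, y))"
    by (simp add: bandit_space_def)
  have k_le: "k y \<le> (\<integral>x. G (x, y) \<partial>normal_measure 0 sig)" for y
  proof -
    have "(\<integral>x. G (x, y) \<partial>normal_measure 0 sig) =
        (\<integral>x. discounted_length \<gamma> (threshold_stop sW n (lam + 2 * \<delta>) (x, y)) * (x - lam) \<partial>normal_measure 0 sig)"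
      by (simp add: G_def)
    moreover have "k y = - A * lam + B * (if \<delta> < \<bar>sW * (\<Sum>i<n. y i) / n\<bar> then - lam else 3 * \<delta> * Q)"
      by (simp add: k_def S_def)
    ultimately show ?thesis
      using threshold_conditional_payoff_ge[OF assms(1-5), where sW=sW and y=y and \<delta>=\<delta>]
      unfolding A_def B_def Q_def by (simp only:)
  qed
  have k_eq: "k y = (- A * lam + B * (3 * \<delta> * Q)) - B * (3 * \<delta> * Q + lam) * indicator S y" for y
    by (simp add: k_def algebra_simps)
  have "(\<integral>y. k y \<partial>noise_space) = (- A * lam + B * (3 * \<delta> * Q)) - B * (3 * \<delta> * Q + lam) * P"
    unfolding k_eq P_def S_def[symmetric] using S noise.prob_space by (simp add: noise.emeasure_eq_measure)
  then have "- A * lam + B * (3 * \<delta> * Q - (3 * \<delta> * Q + lam) * P) = (\<integral>y. k y \<partial>noise_space)"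
    by (simp add: algebra_simps)
  also have "\<dots> \<le> (\<integral>y. (\<integral>x. G (x, y) \<partial>normal_measure 0 sig) \<partial>noise_space)"
  proof (rule integral_mono[OF _ integrable_snd[OF G] k_le])
    show "integrable noise_space k"
      unfolding k_eq using S by (simp add: noise.emeasure_eq_measure)
  qed
  also have "\<dots> = (\<integral>\<omega>. G \<omega> \<partial>bandit_space 0 sig)"
    using integral_snd[OF G] by (simp add: bandit_space_def)
  finally show ?thesis
    by (simp add: G_def)
qed

lemma noise_mean_deviation_le:
  assumes "0 < sW" "0 < n" "0 < \<delta>"
  shows "measure noise_space {y. \<delta> < \<bar>sW * (\<Sum>i<n. y i) / n\<bar>} \<le> sqrt 2 * exp (- (n * \<delta>\<^sup>2 / (4 * sW\<^sup>2)))"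
proof -
  interpret prob_space noise_space
    by (rule prob_space_noise_space)
  have [measurable]: "(\<lambda>y. \<Sum>i<n. y i) \<in> borel_measurable noise_space"
    unfolding measurable_noise_space by simp
  have "{y. \<delta> < \<bar>sW * (\<Sum>i<n. y i) / n\<bar>} \<subseteq> {y \<in> space noise_space. n * \<delta> / sW \<le> \<bar>\<Sum>i<n. y i\<bar>}"
    using assms by (auto simp: space_noise_space abs_mult field_simps)
  then have "measure noise_space {y. \<delta> < \<bar>sW * (\<Sum>i<n. y i) / n\<bar>} \<le>
      measure noise_space {y \<in> space noise_space. n * \<delta> / sW \<le> \<bar>\<Sum>i<n. y i\<bar>}"
    by (intro finite_measure_mono) measurable
  also have "\<dots> \<le> sqrt 2 * exp (- (n * \<delta> / sW)\<^sup>2 / (4 * (sqrt n)\<^sup>2))"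
    using assms by (intro normal_abs_tail_le prob_space_noise_space noise_partial_sum_distributed) auto
  also have "- (n * \<delta> / sW)\<^sup>2 / (4 * (sqrt n)\<^sup>2) = - (n * \<delta>\<^sup>2 / (4 * sW\<^sup>2))"
    using assms by (simp add: power2_eq_square field_simps)
  finally show ?thesis .
qed

section \<open>Choice of the parameters\<close>

lemma geometric_tail_ge:
  fixes \<gamma> :: real
  assumes "0 \<le> \<gamma>" "\<gamma> < 1"
  shows "(1 - (real n + 1) * (1 - \<gamma>)) / (1 - \<gamma>) \<le> 1 / (1 - \<gamma>) - (\<Sum>t\<le>n. \<gamma> ^ t)"
proof -
  have "1 - (real n + 1) * (1 - \<gamma>) \<le> \<gamma> ^ Suc n"
    using Bernoulli_inequality[of "\<gamma> - 1" "Suc n"] assms by (simp add: algebra_simps)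
  then have "(1 - (real n + 1) * (1 - \<gamma>)) / (1 - \<gamma>) \<le> \<gamma> ^ Suc n / (1 - \<gamma>)"
    using assms by (simp add: divide_right_mono)
  also have "\<dots> = 1 / (1 - \<gamma>) - (\<Sum>t\<le>n. \<gamma> ^ t)"
    using assms geometric_sum[of \<gamma> "Suc n"] by (simp add: lessThan_Suc_atMost field_simps)
  finally show ?thesis .
qed

lemma exploration_length_bounds:
  fixes sW L :: real
  assumes "0 < sW" "3 \<le> L" "4 * sW\<^sup>2 + 3 \<le> L"
  defines "n \<equiv> nat \<lceil>4 * sW\<^sup>2 * L ^ 4\<rceil> + 1"
  shows "L\<^sup>2 \<le> n * (1 / L)\<^sup>2 / (4 * sW\<^sup>2)" "real n + 1 \<le> L ^ 5"
proof -
  have "real (nat \<lceil>4 * sW\<^sup>2 * L ^ 4\<rceil>) = of_int \<lceil>4 * sW\<^sup>2 * L ^ 4\<rceil>"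
    by simp
  then have n: "4 * sW\<^sup>2 * L ^ 4 \<le> n" "n \<le> 4 * sW\<^sup>2 * L ^ 4 + 2"
    unfolding n_def using of_int_ceiling_le_add_one[of "4 * sW\<^sup>2 * L ^ 4"] by linarith+
  have "L\<^sup>2 = 4 * sW\<^sup>2 * L ^ 4 * (1 / L)\<^sup>2 / (4 * sW\<^sup>2)"
    using assms by (simp add: field_simps power2_eq_square power4_eq_xxxx)
  also have "\<dots> \<le> n * (1 / L)\<^sup>2 / (4 * sW\<^sup>2)"
    using n by (intro divide_right_mono mult_right_mono) auto
  finally show "L\<^sup>2 \<le> n * (1 / L)\<^sup>2 / (4 * sW\<^sup>2)" .
  have "1 \<le> L ^ 4"
    using assms by simp
  have "real n + 1 \<le> 4 * sW\<^sup>2 * L ^ 4 + 3"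
    using n by linarith
  also have "\<dots> \<le> (4 * sW\<^sup>2 + 3) * L ^ 4"
    using \<open>1 \<le> L ^ 4\<close> by (simp add: algebra_simps)
  also have "\<dots> \<le> L * L ^ 4"
    using assms by (intro mult_right_mono) auto
  finally show "real n + 1 \<le> L ^ 5"
    by (simp add: power_Suc[symmetric])
qed

lemma commitment_weight_ge:
  fixes \<gamma> L :: real
  assumes "0 \<le> \<gamma>" "\<gamma> < 1" "1 - \<gamma> = exp (- L\<^sup>2 / 2)" "real n + 1 \<le> L ^ 5"
  shows "(1 - L ^ 5 * exp (- L\<^sup>2 / 2)) * exp (L\<^sup>2 / 2) \<le> 1 / (1 - \<gamma>) - (\<Sum>t\<le>n. \<gamma> ^ t)"
proof -
  have "exp (L\<^sup>2 / 2) = 1 / (1 - \<gamma>)"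
    unfolding assms(3) by (simp add: exp_minus field_simps)
  then have "(1 - L ^ 5 * exp (- L\<^sup>2 / 2)) * exp (L\<^sup>2 / 2) = (1 - L ^ 5 * (1 - \<gamma>)) / (1 - \<gamma>)"
    unfolding assms(3)[symmetric] by simp
  also have "\<dots> \<le> (1 - (real n + 1) * (1 - \<gamma>)) / (1 - \<gamma>)"
    using assms by (intro divide_right_mono diff_left_mono mult_right_mono) auto
  also have "\<dots> \<le> 1 / (1 - \<gamma>) - (\<Sum>t\<le>n. \<gamma> ^ t)"
    using assms by (intro geometric_tail_ge) auto
  finally show ?thesis .
qed

(* Lower bound, at delta = 1/L and lam = L - 1/sqrt L, for the factor
   3 delta Q - (3 delta Q + lam) P of the commitment weight in threshold_expected_payoff_ge. *)
definition commitment_gain_bound :: "real \<Rightarrow> real" where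
  "commitment_gain_bound L =
    3 / L\<^sup>2 * std_normal_density (L - 1 / sqrt L + 4 / L) - (1 + L) * sqrt 2 * exp (- L\<^sup>2)"

lemma commitment_gain_bound_le:
  fixes L P :: real
  assumes "3 \<le> L" "0 \<le> P" "P \<le> sqrt 2 * exp (- L\<^sup>2)"
  defines "lam \<equiv> L - 1 / sqrt L" and "\<delta> \<equiv> 1 / L"
  defines "Q \<equiv> measure (normal_measure 0 1) {lam + 3 * \<delta>..}"
  shows "commitment_gain_bound L \<le> 3 * \<delta> * Q - (3 * \<delta> * Q + lam) * P"
proof -
  have "0 \<le> 1 / sqrt L" "1 / sqrt L \<le> 1"
    using \<open>3 \<le> L\<close> by simp_all
  then have lam: "0 \<le> lam" "lam \<le> L"
    using \<open>3 \<le> L\<close> unfolding lam_def by linarith+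
  have \<delta>: "0 < \<delta>" "3 * \<delta> \<le> 1"
    using \<open>3 \<le> L\<close> by (auto simp: \<delta>_def field_simps)
  have "lam + 3 * \<delta> + \<delta> = L - 1 / sqrt L + 4 / L"
    by (simp add: lam_def \<delta>_def)
  then have "\<delta> * std_normal_density (L - 1 / sqrt L + 4 / L) \<le> Q"
    using std_normal_upper_tail_ge[of "lam + 3 * \<delta>" \<delta>] lam \<delta> by (simp add: Q_def)
  then have "3 * \<delta> * (\<delta> * std_normal_density (L - 1 / sqrt L + 4 / L)) \<le> 3 * \<delta> * Q"
    using \<delta> by (intro mult_left_mono) auto
  then have gain: "3 / L\<^sup>2 * std_normal_density (L - 1 / sqrt L + 4 / L) \<le> 3 * \<delta> * Q"
    by (simp add: \<delta>_def power2_eq_square)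
  have "Q \<le> 1"
    unfolding Q_def using prob_space.prob_le_1[OF prob_space_normal_density[of 1]] by simp
  then have "3 * \<delta> * Q \<le> 1"
    using mult_left_mono[of Q 1 "3 * \<delta>"] \<delta> by linarith
  then have "(3 * \<delta> * Q + lam) * P \<le> (1 + L) * (sqrt 2 * exp (- L\<^sup>2))"
    using lam assms(1-3) by (intro mult_mono) auto
  then have loss: "(3 * \<delta> * Q + lam) * P \<le> (1 + L) * sqrt 2 * exp (- L\<^sup>2)"
    by (simp only: mult.assoc)
  show ?thesis
    unfolding commitment_gain_bound_def using gain loss by linarith
qed

lemma gittins_index_ge_large:
  fixes sW \<gamma> L :: real
  assumes "0 < sW" "0 < \<gamma>" "\<gamma> < 1" "1 - \<gamma> = exp (- L\<^sup>2 / 2)"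
    and "3 \<le> L" "4 * sW\<^sup>2 + 3 \<le> L"
    and small: "L ^ 5 * exp (- L\<^sup>2 / 2) \<le> 1"
    and gain: "0 \<le> commitment_gain_bound L"
    and large: "L ^ 6 \<le> commitment_gain_bound L * ((1 - L ^ 5 * exp (- L\<^sup>2 / 2)) * exp (L\<^sup>2 / 2))"
  shows "L - 1 / sqrt L \<le> gittins_index 0 1 sW \<gamma>"
proof -
  define lam where "lam = L - 1 / sqrt L"
  define \<delta> where "\<delta> = 1 / L"
  define n where "n = nat \<lceil>4 * sW\<^sup>2 * L ^ 4\<rceil> + 1"
  define A where "A = (\<Sum>t\<le>n. \<gamma> ^ t)"
  define B where "B = 1 / (1 - \<gamma>) - (\<Sum>t\<le>n. \<gamma> ^ t)"
  define Q where "Q = measure (normal_measure 0 1) {lam + 3 * \<delta>..}"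
  define P where "P = measure noise_space {y. \<delta> < \<bar>sW * (\<Sum>i<n. y i) / n\<bar>}"
  define B\<^sub>0 where "B\<^sub>0 = (1 - L ^ 5 * exp (- L\<^sup>2 / 2)) * exp (L\<^sup>2 / 2)"
  note n_bounds = exploration_length_bounds[OF \<open>0 < sW\<close> \<open>3 \<le> L\<close> \<open>4 * sW\<^sup>2 + 3 \<le> L\<close>, folded n_def \<delta>_def]
  have "0 \<le> 1 / sqrt L" "1 / sqrt L \<le> 1"
    using \<open>3 \<le> L\<close> by simp_all
  then have "0 \<le> lam" "lam \<le> L"
    using \<open>3 \<le> L\<close> unfolding lam_def by linarith+
  have "0 < n" "0 < \<delta>"
    using \<open>3 \<le> L\<close> by (simp_all add: n_def \<delta>_def)
  have "A \<le> (\<Sum>t\<le>n. 1)"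
    unfolding A_def using assms by (intro sum_mono power_le_one) auto
  then have "A * lam \<le> L ^ 5 * L"
    using n_bounds(2) \<open>0 \<le> lam\<close> \<open>lam \<le> L\<close> \<open>3 \<le> L\<close> by (intro mult_mono) auto
  also have "\<dots> \<le> commitment_gain_bound L * B\<^sub>0"
    using large by (simp add: B\<^sub>0_def numeral_eq_Suc)
  also have "\<dots> \<le> (3 * \<delta> * Q - (3 * \<delta> * Q + lam) * P) * B"
  proof (intro mult_mono gain)
    have "sqrt 2 * exp (- (n * \<delta>\<^sup>2 / (4 * sW\<^sup>2))) \<le> sqrt 2 * exp (- L\<^sup>2)"
      using n_bounds(1) by simp
    then have "P \<le> sqrt 2 * exp (- L\<^sup>2)"
      using noise_mean_deviation_le[OF \<open>0 < sW\<close> \<open>0 < n\<close> \<open>0 < \<delta>\<close>] unfolding P_def by linarith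
    then have "commitment_gain_bound L \<le> 3 * \<delta> * Q - (3 * \<delta> * Q + lam) * P"
      using commitment_gain_bound_le[OF \<open>3 \<le> L\<close>, of P] by (simp add: P_def Q_def lam_def \<delta>_def)
    then show "commitment_gain_bound L \<le> 3 * \<delta> * Q - (3 * \<delta> * Q + lam) * P"
      "0 \<le> 3 * \<delta> * Q - (3 * \<delta> * Q + lam) * P"
      using gain by simp_all
    show "B\<^sub>0 \<le> B" "0 \<le> B\<^sub>0"
      using commitment_weight_ge[of \<gamma> L n] n_bounds(2) small assms by (simp_all add: B\<^sub>0_def B_def)
  qed
  finally have "0 \<le> - A * lam + B * (3 * \<delta> * Q - (3 * \<delta> * Q + lam) * P)"
    by (simp add: mult.commute)
  also have "\<dots> \<le>
      (\<integral>\<omega>. discounted_length \<gamma> (threshold_stop sW n (lam + 2 * \<delta>) \<omega>) * (fst \<omega> - lam) \<partial>bandit_space 0 1)"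
    using threshold_expected_payoff_ge[of 1 \<gamma> n lam \<delta> sW] assms \<open>0 < n\<close> \<open>0 \<le> lam\<close>
    by (simp add: A_def B_def Q_def P_def)
  finally have "lam \<le> gittins_index 0 1 sW \<gamma>"
    using assms by (intro gittins_index_ge[OF _ _ _ \<open>0 \<le> lam\<close> admissible_threshold_stop[OF \<open>0 < n\<close>]]) auto
  then show ?thesis
    by (simp add: lam_def)
qed

lemma eventually_gittins_index_ge:
  assumes "0 < sW"
  shows "\<forall>\<^sub>F L in at_top. \<forall>\<gamma>. 0 < \<gamma> \<and> \<gamma> < 1 \<and> 1 - \<gamma> = exp (- L\<^sup>2 / 2) \<longrightarrow>
    L - 1 / sqrt L \<le> gittins_index 0 1 sW \<gamma>"
proof -
  have "\<forall>\<^sub>F L in at_top. 3 \<le> L \<and> 4 * sW\<^sup>2 + 3 \<le> L \<and> L ^ 5 * exp (- L\<^sup>2 / 2) \<le> 1 \<and>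
      0 \<le> commitment_gain_bound L \<and>
      L ^ 6 \<le> commitment_gain_bound L * ((1 - L ^ 5 * exp (- L\<^sup>2 / 2)) * exp (L\<^sup>2 / 2))"
    unfolding commitment_gain_bound_def std_normal_density_def
    by (intro eventually_conj eventually_ge_at_top; real_asymp)
  then show ?thesis
    by eventually_elim (use assms gittins_index_ge_large in blast)
qed

theorem lemma5:
  fixes sW :: real
  assumes "sW > 0"
  shows "\<exists>f :: real \<Rightarrow> real. (f \<longlongrightarrow> 0) (at_left 1) \<and>
           (\<forall>\<^sub>F \<gamma> in at_left 1.
              gittins_index 0 1 sW \<gamma> \<ge> sqrt (2 * ln (1 / (1 - \<gamma>))) + f \<gamma>)"
proof -
  define L where "L \<gamma> = sqrt (2 * ln (1 / (1 - \<gamma>)))" for \<gamma> :: real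
  have "filterlim L at_top (at_left 1)"
    unfolding L_def by real_asymp
  with eventually_gittins_index_ge[OF assms]
  have "\<forall>\<^sub>F \<gamma> in at_left 1. \<forall>\<gamma>'. 0 < \<gamma>' \<and> \<gamma>' < 1 \<and> 1 - \<gamma>' = exp (- (L \<gamma>)\<^sup>2 / 2) \<longrightarrow>
      L \<gamma> - 1 / sqrt (L \<gamma>) \<le> gittins_index 0 1 sW \<gamma>'"
    by (rule eventually_compose_filterlim)
  moreover have "\<forall>\<^sub>F \<gamma> in at_left 1. \<gamma> \<in> {0<..<1::real}"
    by (rule eventually_at_left_real) simp
  ultimately have "\<forall>\<^sub>F \<gamma> in at_left 1. L \<gamma> - 1 / sqrt (L \<gamma>) \<le> gittins_index 0 1 sW \<gamma>"
  proof eventually_elim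
    case (elim \<gamma>)
    then have "(L \<gamma>)\<^sup>2 = 2 * ln (1 / (1 - \<gamma>))"
      by (simp add: L_def)
    then have "1 - \<gamma> = exp (- (L \<gamma>)\<^sup>2 / 2)"
      using elim by (simp add: ln_div)
    then show ?case
      using elim by auto
  qed
  moreover have "((\<lambda>\<gamma>. - 1 / sqrt (L \<gamma>)) \<longlongrightarrow> 0) (at_left 1)"
    unfolding L_def by real_asymp
  ultimately show ?thesis
    by (intro exI[of _ "\<lambda>\<gamma>. - 1 / sqrt (L \<gamma>)"]) (simp add: L_def)
qed

end
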